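(* Consider simultaneous two-player weighted congestion games with affine costs and uniform cost functions, where the player weights $w_1,w_2\ge 0$ (with $w_1+w_2>0$) are arbitrary. The price of anarchy (supremum over all weights and all instances, with respect to pure Nash equilibria) is equal to $1+2/\sqrt{3}\approx 2.155$, both for general congestion games and for network routing games. Moreover, for fixed weights the price of anarchy equals $1+2/\sqrt{3}$ when $w_1/w_2 = 1+\sqrt{3}$ and when $w_2/w_1 = 1+\sqrt{3}$.
   Context: A weighted two-player congestion game with affine costs consists of a finite set $R$ of resources, coefficients $\alpha_r,\beta_r \geq 0$ for each $r\in R$, two players $i=1,2$ with weights $w_i\ge 0$, and for each player $i$ a nonempty finite set $\mathcal{A}_i \subseteq 2^R$ of actions. For an action profile $A=(A_1,A_2)$ the load of $r$ is $x_r(A)=\sum_{j:\, r\in A_j} w_j$. With uniform costs, player $i$ pays $C_i(A)=\sum_{r\in A_i}(\alpha_r+\beta_r x_r(A))$. The social cost is $C(A)=C_1(A)+C_2(A)$. In a network routing game, $R$ is the arc set of a directed graph, player $i$ has a source $s_i$ and sink $t_i$, and $\mathcal{A}_i$ is the set of arc sets of directed $s_i$–$t_i$ paths. A profile $(A_1^*,A_2^* )$ is a (pure) Nash equilibrium if no player can lower her cost by unilaterally changing her action. The price of anarchy of an instance is the maximum over Nash equilibria $A$ of $C(A)/\min_{A'} C(A')$; the price of anarchy of a class is the supremum over all instances in the class (with positive optimal social cost). *)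

theory Defs
  imports Complex_Main
begin

text \<open>Resources are natural numbers (an infinite supply, so that every finite
  instance can be represented).\<close>

definition load :: "real \<Rightarrow> real \<Rightarrow> nat set \<Rightarrow> nat set \<Rightarrow> nat \<Rightarrow> real" where
  "load w1 w2 S1 S2 r = (if r \<in> S1 then w1 else 0) + (if r \<in> S2 then w2 else 0)"

definition pcost :: "(nat \<Rightarrow> real) \<Rightarrow> (nat \<Rightarrow> real) \<Rightarrow> real \<Rightarrow> real \<Rightarrow>
    nat set \<Rightarrow> nat set \<Rightarrow> nat set \<Rightarrow> real" where
  "pcost \<alpha> \<beta> w1 w2 S1 S2 S = (\<Sum>r\<in>S. \<alpha> r + \<beta> r * load w1 w2 S1 S2 r)"

definition cost1 :: "(nat \<Rightarrow> real) \<Rightarrow> (nat \<Rightarrow> real) \<Rightarrow> real \<Rightarrow> real \<Rightarrow>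
    nat set \<Rightarrow> nat set \<Rightarrow> real" where
  "cost1 \<alpha> \<beta> w1 w2 S1 S2 = pcost \<alpha> \<beta> w1 w2 S1 S2 S1"

definition cost2 :: "(nat \<Rightarrow> real) \<Rightarrow> (nat \<Rightarrow> real) \<Rightarrow> real \<Rightarrow> real \<Rightarrow>
    nat set \<Rightarrow> nat set \<Rightarrow> real" where
  "cost2 \<alpha> \<beta> w1 w2 S1 S2 = pcost \<alpha> \<beta> w1 w2 S1 S2 S2"

definition social_cost :: "(nat \<Rightarrow> real) \<Rightarrow> (nat \<Rightarrow> real) \<Rightarrow> real \<Rightarrow> real \<Rightarrow>
    nat set \<Rightarrow> nat set \<Rightarrow> real" where
  "social_cost \<alpha> \<beta> w1 w2 S1 S2 = cost1 \<alpha> \<beta> w1 w2 S1 S2 + cost2 \<alpha> \<beta> w1 w2 S1 S2"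

definition valid_game :: "nat set \<Rightarrow> (nat \<Rightarrow> real) \<Rightarrow> (nat \<Rightarrow> real) \<Rightarrow>
    nat set set \<Rightarrow> nat set set \<Rightarrow> bool" where
  "valid_game R \<alpha> \<beta> A1 A2 \<longleftrightarrow> finite R \<and> (\<forall>r\<in>R. 0 \<le> \<alpha> r \<and> 0 \<le> \<beta> r) \<and>
     A1 \<noteq> {} \<and> A2 \<noteq> {} \<and> A1 \<subseteq> Pow R \<and> A2 \<subseteq> Pow R"

definition is_NE :: "nat set set \<Rightarrow> nat set set \<Rightarrow> (nat \<Rightarrow> real) \<Rightarrow> (nat \<Rightarrow> real) \<Rightarrow>
    real \<Rightarrow> real \<Rightarrow> nat set \<Rightarrow> nat set \<Rightarrow> bool" where
  "is_NE A1 A2 \<alpha> \<beta> w1 w2 S1 S2 \<longleftrightarrow> S1 \<in> A1 \<and> S2 \<in> A2 \<and>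
     (\<forall>S\<in>A1. cost1 \<alpha> \<beta> w1 w2 S1 S2 \<le> cost1 \<alpha> \<beta> w1 w2 S S2) \<and>
     (\<forall>S\<in>A2. cost2 \<alpha> \<beta> w1 w2 S1 S2 \<le> cost2 \<alpha> \<beta> w1 w2 S1 S)"

definition opt_cost :: "nat set set \<Rightarrow> nat set set \<Rightarrow> (nat \<Rightarrow> real) \<Rightarrow> (nat \<Rightarrow> real) \<Rightarrow>
    real \<Rightarrow> real \<Rightarrow> real" where
  "opt_cost A1 A2 \<alpha> \<beta> w1 w2 =
     Min ((\<lambda>(S1, S2). social_cost \<alpha> \<beta> w1 w2 S1 S2) ` (A1 \<times> A2))"

text \<open>Network routing games: resources are arcs (natural numbers) of a
  finite directed multigraph with arc set E, tail function src and head
  function dst.\<close>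
fun is_walk :: "(nat \<Rightarrow> nat) \<Rightarrow> (nat \<Rightarrow> nat) \<Rightarrow> nat \<Rightarrow> nat \<Rightarrow> nat list \<Rightarrow> bool" where
  "is_walk src dst s t [] = (s = t)"
| "is_walk src dst s t (e # es) = (src e = s \<and> is_walk src dst (dst e) t es)"

definition path_arcsets :: "nat set \<Rightarrow> (nat \<Rightarrow> nat) \<Rightarrow> (nat \<Rightarrow> nat) \<Rightarrow> nat \<Rightarrow> nat \<Rightarrow> nat set set" where
  "path_arcsets E src dst s t =
     {set es | es. set es \<subseteq> E \<and> is_walk src dst s t es \<and> distinct (s # map dst es)}"

definition network_game :: "nat set \<Rightarrow> (nat \<Rightarrow> real) \<Rightarrow> (nat \<Rightarrow> real) \<Rightarrow>
    nat set set \<Rightarrow> nat set set \<Rightarrow> bool" where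
  "network_game R \<alpha> \<beta> A1 A2 \<longleftrightarrow> valid_game R \<alpha> \<beta> A1 A2 \<and>
     (\<exists>src dst s1 t1 s2 t2. A1 = path_arcsets R src dst s1 t1 \<and> A2 = path_arcsets R src dst s2 t2)"

definition poa_ratios :: "(nat set \<Rightarrow> (nat \<Rightarrow> real) \<Rightarrow> (nat \<Rightarrow> real) \<Rightarrow>
    nat set set \<Rightarrow> nat set set \<Rightarrow> bool) \<Rightarrow> real \<Rightarrow> real \<Rightarrow> real set" where
  "poa_ratios cls w1 w2 =
     {social_cost \<alpha> \<beta> w1 w2 S1 S2 / opt_cost A1 A2 \<alpha> \<beta> w1 w2 | R \<alpha> \<beta> A1 A2 S1 S2.
        cls R \<alpha> \<beta> A1 A2 \<and> 0 < opt_cost A1 A2 \<alpha> \<beta> w1 w2 \<and> is_NE A1 A2 \<alpha> \<beta> w1 w2 S1 S2}"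

definition poa_fixed :: "(nat set \<Rightarrow> (nat \<Rightarrow> real) \<Rightarrow> (nat \<Rightarrow> real) \<Rightarrow>
    nat set set \<Rightarrow> nat set set \<Rightarrow> bool) \<Rightarrow> real \<Rightarrow> real \<Rightarrow> real" where
  "poa_fixed cls w1 w2 = Sup (poa_ratios cls w1 w2)"

definition poa_all :: "(nat set \<Rightarrow> (nat \<Rightarrow> real) \<Rightarrow> (nat \<Rightarrow> real) \<Rightarrow>
    nat set set \<Rightarrow> nat set set \<Rightarrow> bool) \<Rightarrow> real" where
  "poa_all cls = Sup (\<Union>{poa_ratios cls w1 w2 | w1 w2. 0 \<le> w1 \<and> 0 \<le> w2 \<and> 0 < w1 + w2})"

end

theory Submission
  imports Defs
begin

text \<open>For w2 \<le> w1 let D = w1^2 + w1 w2 + w2^2 and P = (w1 + w2)(2 w1 + w2).  Adding to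
  D C(S) the equilibrium inequality of player 1 for a deviation to her optimal action, weighted
  by w1 (2 w1 + w2), and that of player 2, weighted by D, gives D C(S) \<le> P C(O), because the
  combined inequality already holds resource by resource.  The identity
  \<surd>3 (\<rho> D - P) = (2 - \<surd>3) (w1 - (1 + \<surd>3) w2)^2 for \<rho> = 1 + 2/\<surd>3 then shows P \<le> \<rho> D, with
  equality for w1 = (1 + \<surd>3) w2.  At that weight ratio a small network attains the bound: its
  equilibrium leaves each player indifferent between her equilibrium and her optimal path.\<close>

section \<open>The upper bound\<close>

lemma load_eq: "load w1 w2 S1 S2 r = w1 * of_bool (r \<in> S1) + w2 * of_bool (r \<in> S2)"
  by (simp add: load_def)

lemma pcost_eq_sum:
  assumes "finite R" "S \<subseteq> R"
  shows "pcost \<alpha> \<beta> w1 w2 S1 S2 S = (\<Sum>r\<in>R. of_bool (r \<in> S) * (\<alpha> r + \<beta> r * load w1 w2 S1 S2 r))"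
  unfolding pcost_def using assms by (simp add: sum.inter_restrict[symmetric] Int_absorb1)

text \<open>c x1 x2 is the cost of the resource to each of its users when player i uses it iff xi;
  p1, p2 record membership in the equilibrium actions and q1, q2 in the optimal ones.\<close>
lemma resource_cost_inequality:
  fixes w1 w2 a b :: real
  assumes w: "0 \<le> w2" "w2 \<le> w1" and ab: "0 \<le> a" "0 \<le> b"
  defines "c \<equiv> \<lambda>x1 x2. a + b * (w1 * of_bool x1 + w2 * of_bool x2)"
  shows "(w1^2 + w1 * w2 + w2^2) * (of_bool p1 * c p1 p2 + of_bool p2 * c p1 p2)
       + w1 * (2 * w1 + w2) * (of_bool q1 * c q1 p2 - of_bool p1 * c p1 p2)
       + (w1^2 + w1 * w2 + w2^2) * (of_bool q2 * c p1 q2 - of_bool p2 * c p1 p2)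
     \<le> (w1 + w2) * (2 * w1 + w2) * (of_bool q1 * c q1 q2 + of_bool q2 * c q1 q2)"
proof -
  obtain d where d: "0 \<le> d" "w1 = w2 + d" using w by (intro that[of "w1 - w2"]) auto
  show ?thesis using d w ab unfolding c_def
    by (cases p1; cases p2; cases q1; cases q2; simp add: power2_eq_square algebra_simps;
        smt (verit) mult_nonneg_nonneg)
qed

lemma NE_social_cost_weighted_le:
  assumes game: "valid_game R \<alpha> \<beta> A1 A2" and NE: "is_NE A1 A2 \<alpha> \<beta> w1 w2 S1 S2"
    and O: "O1 \<in> A1" "O2 \<in> A2" and w: "0 \<le> w2" "w2 \<le> w1"
  shows "(w1^2 + w1 * w2 + w2^2) * social_cost \<alpha> \<beta> w1 w2 S1 S2
     \<le> (w1 + w2) * (2 * w1 + w2) * social_cost \<alpha> \<beta> w1 w2 O1 O2"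
proof -
  define D where "D = w1^2 + w1 * w2 + w2^2"
  define A where "A = w1 * (2 * w1 + w2)"
  define P where "P = (w1 + w2) * (2 * w1 + w2)"
  have R: "finite R" "S1 \<subseteq> R" "S2 \<subseteq> R" "O1 \<subseteq> R" "O2 \<subseteq> R"
    and coeffs: "\<And>r. r \<in> R \<Longrightarrow> 0 \<le> \<alpha> r \<and> 0 \<le> \<beta> r"
    using game NE O unfolding valid_game_def is_NE_def by auto
  have slack1: "0 \<le> cost1 \<alpha> \<beta> w1 w2 O1 S2 - cost1 \<alpha> \<beta> w1 w2 S1 S2"
    and slack2: "0 \<le> cost2 \<alpha> \<beta> w1 w2 S1 O2 - cost2 \<alpha> \<beta> w1 w2 S1 S2"
    using NE O unfolding is_NE_def by auto
  have "D * social_cost \<alpha> \<beta> w1 w2 S1 S2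
        + A * (cost1 \<alpha> \<beta> w1 w2 O1 S2 - cost1 \<alpha> \<beta> w1 w2 S1 S2)
        + D * (cost2 \<alpha> \<beta> w1 w2 S1 O2 - cost2 \<alpha> \<beta> w1 w2 S1 S2)
      \<le> P * social_cost \<alpha> \<beta> w1 w2 O1 O2"
    unfolding social_cost_def cost1_def cost2_def load_eq
      pcost_eq_sum[OF R(1,2)] pcost_eq_sum[OF R(1,3)] pcost_eq_sum[OF R(1,4)] pcost_eq_sum[OF R(1,5)]
      sum.distrib[symmetric] sum_subtractf[symmetric] sum_distrib_left
    unfolding D_def A_def P_def
    by (rule sum_mono, rule resource_cost_inequality) (use w coeffs in auto)
  moreover have "0 \<le> A * (cost1 \<alpha> \<beta> w1 w2 O1 S2 - cost1 \<alpha> \<beta> w1 w2 S1 S2)"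
    and "0 \<le> D * (cost2 \<alpha> \<beta> w1 w2 S1 O2 - cost2 \<alpha> \<beta> w1 w2 S1 S2)"
    using slack1 slack2 w unfolding A_def D_def by simp_all
  ultimately show ?thesis unfolding D_def P_def by linarith
qed

lemma poa_weights_identity:
  "sqrt 3 * ((1 + 2 / sqrt 3) * (w1^2 + w1 * w2 + w2^2) - (w1 + w2) * (2 * w1 + w2))
     = (2 - sqrt 3) * (w1 - (1 + sqrt 3) * w2)^2"
proof -
  have "sqrt 3 * (sqrt 3 * x) = 3 * x" for x :: real
    by (simp flip: mult.assoc)
  then show ?thesis
    by (simp add: field_simps power2_eq_square)
qed

lemma poa_weights_le: "(w1 + w2) * (2 * w1 + w2) \<le> (1 + 2 / sqrt 3) * (w1^2 + w1 * w2 + w2^2)"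
proof -
  have "sqrt 3 < 2"
    using real_sqrt_less_iff[of 3 4] by simp
  then have "0 \<le> sqrt 3 * ((1 + 2 / sqrt 3) * (w1^2 + w1 * w2 + w2^2) - (w1 + w2) * (2 * w1 + w2))"
    unfolding poa_weights_identity by simp
  then show ?thesis by (simp add: zero_le_mult_iff)
qed

lemma poa_weights_eq:
  assumes "w1 = (1 + sqrt 3) * w2"
  shows "(w1 + w2) * (2 * w1 + w2) = (1 + 2 / sqrt 3) * (w1^2 + w1 * w2 + w2^2)"
  using poa_weights_identity[of w1 w2] assms by simp

lemma pcost_swap: "pcost \<alpha> \<beta> w2 w1 S2 S1 = pcost \<alpha> \<beta> w1 w2 S1 S2"
  unfolding pcost_def load_def by (intro ext sum.cong refl) (simp add: algebra_simps)

lemma social_cost_swap: "social_cost \<alpha> \<beta> w2 w1 S2 S1 = social_cost \<alpha> \<beta> w1 w2 S1 S2"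
  by (simp add: social_cost_def cost1_def cost2_def pcost_swap)

lemma is_NE_swap: "is_NE A2 A1 \<alpha> \<beta> w2 w1 S2 S1 = is_NE A1 A2 \<alpha> \<beta> w1 w2 S1 S2"
  by (auto simp: is_NE_def cost1_def cost2_def pcost_swap)

lemma valid_game_swap: "valid_game R \<alpha> \<beta> A2 A1 = valid_game R \<alpha> \<beta> A1 A2"
  by (auto simp: valid_game_def)

lemma network_game_swap: "network_game R \<alpha> \<beta> A2 A1 = network_game R \<alpha> \<beta> A1 A2"
  unfolding network_game_def using valid_game_swap by blast

lemma opt_cost_swap: "opt_cost A2 A1 \<alpha> \<beta> w2 w1 = opt_cost A1 A2 \<alpha> \<beta> w1 w2"
proof -
  have "(\<lambda>(S2, S1). social_cost \<alpha> \<beta> w2 w1 S2 S1) ` (A2 \<times> A1)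
      = (\<lambda>(S1, S2). social_cost \<alpha> \<beta> w1 w2 S1 S2) ` prod.swap ` (A2 \<times> A1)"
    by (auto simp: image_image social_cost_swap)
  then show ?thesis unfolding opt_cost_def product_swap by simp
qed

lemma poa_ratios_swap:
  assumes cls_swap: "\<And>R \<alpha> \<beta> A1 A2. cls R \<alpha> \<beta> A2 A1 = cls R \<alpha> \<beta> A1 A2"
  shows "poa_ratios cls w2 w1 = poa_ratios cls w1 w2"
proof -
  have "poa_ratios cls v2 v1 \<subseteq> poa_ratios cls v1 v2" for v1 v2
  proof
    fix x assume "x \<in> poa_ratios cls v2 v1"
    then obtain R \<alpha> \<beta> A1 A2 S1 S2 where
      "x = social_cost \<alpha> \<beta> v2 v1 S2 S1 / opt_cost A2 A1 \<alpha> \<beta> v2 v1"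
      "cls R \<alpha> \<beta> A2 A1" "0 < opt_cost A2 A1 \<alpha> \<beta> v2 v1" "is_NE A2 A1 \<alpha> \<beta> v2 v1 S2 S1"
      unfolding poa_ratios_def by blast
    then have "x = social_cost \<alpha> \<beta> v1 v2 S1 S2 / opt_cost A1 A2 \<alpha> \<beta> v1 v2"
      "cls R \<alpha> \<beta> A1 A2" "0 < opt_cost A1 A2 \<alpha> \<beta> v1 v2" "is_NE A1 A2 \<alpha> \<beta> v1 v2 S1 S2"
      by (simp_all only: social_cost_swap opt_cost_swap is_NE_swap cls_swap[of R \<alpha> \<beta> A1 A2])
    then show "x \<in> poa_ratios cls v1 v2"
      unfolding poa_ratios_def by blast
  qed
  then show ?thesis by blast
qed

lemma social_cost_nonneg:
  assumes "valid_game R \<alpha> \<beta> A1 A2" "S1 \<in> A1" "S2 \<in> A2" "0 \<le> w1" "0 \<le> w2"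
  shows "0 \<le> social_cost \<alpha> \<beta> w1 w2 S1 S2"
  using assms unfolding valid_game_def social_cost_def cost1_def cost2_def pcost_def load_def
  by (intro add_nonneg_nonneg sum_nonneg) (auto intro!: mult_nonneg_nonneg)

lemma pcost_subset_le:
  assumes "finite P" "Q \<subseteq> P" "\<And>r. r \<in> P \<Longrightarrow> 0 \<le> \<alpha> r + \<beta> r * load w1 w2 S1 S2 r"
  shows "pcost \<alpha> \<beta> w1 w2 S1 S2 Q \<le> pcost \<alpha> \<beta> w1 w2 S1 S2 P"
  unfolding pcost_def using assms by (intro sum_mono2) auto

lemma NE_social_cost_le_ordered:
  assumes game: "valid_game R \<alpha> \<beta> A1 A2" and NE: "is_NE A1 A2 \<alpha> \<beta> w1 w2 S1 S2"
    and O: "O1 \<in> A1" "O2 \<in> A2" and w: "0 \<le> w2" "w2 \<le> w1" "0 < w1"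
  shows "social_cost \<alpha> \<beta> w1 w2 S1 S2 \<le> (1 + 2 / sqrt 3) * social_cost \<alpha> \<beta> w1 w2 O1 O2"
proof -
  have D: "0 < w1^2 + w1 * w2 + w2^2" using w by (simp add: add_pos_nonneg)
  have O_nonneg: "0 \<le> social_cost \<alpha> \<beta> w1 w2 O1 O2"
    using social_cost_nonneg[OF game O] w by simp
  have "(w1^2 + w1 * w2 + w2^2) * social_cost \<alpha> \<beta> w1 w2 S1 S2
     \<le> (w1 + w2) * (2 * w1 + w2) * social_cost \<alpha> \<beta> w1 w2 O1 O2"
    using NE_social_cost_weighted_le[OF game NE O w(1,2)] .
  also have "\<dots> \<le> (1 + 2 / sqrt 3) * (w1^2 + w1 * w2 + w2^2) * social_cost \<alpha> \<beta> w1 w2 O1 O2"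
    by (intro mult_right_mono poa_weights_le O_nonneg)
  also have "\<dots> = (w1^2 + w1 * w2 + w2^2) * ((1 + 2 / sqrt 3) * social_cost \<alpha> \<beta> w1 w2 O1 O2)"
    by (simp only: ac_simps)
  finally show ?thesis using D by (simp only: mult_le_cancel_left_pos)
qed

lemma NE_social_cost_le:
  assumes game: "valid_game R \<alpha> \<beta> A1 A2" and NE: "is_NE A1 A2 \<alpha> \<beta> w1 w2 S1 S2"
    and O: "O1 \<in> A1" "O2 \<in> A2" and w: "0 \<le> w1" "0 \<le> w2" "0 < w1 + w2"
  shows "social_cost \<alpha> \<beta> w1 w2 S1 S2 \<le> (1 + 2 / sqrt 3) * social_cost \<alpha> \<beta> w1 w2 O1 O2"
proof (cases "w2 \<le> w1")
  case True
  then show ?thesis using NE_social_cost_le_ordered[OF game NE O] w by simp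
next
  case False
  then show ?thesis
    using NE_social_cost_le_ordered[of R \<alpha> \<beta> A2 A1 w2 w1 S2 S1 O2 O1] game NE O w
    by (simp only: valid_game_swap is_NE_swap social_cost_swap)
qed

lemma opt_cost_attained:
  assumes "valid_game R \<alpha> \<beta> A1 A2"
  obtains O1 O2 where "O1 \<in> A1" "O2 \<in> A2"
    "opt_cost A1 A2 \<alpha> \<beta> w1 w2 = social_cost \<alpha> \<beta> w1 w2 O1 O2"
proof -
  have "finite A1" "finite A2" "A1 \<times> A2 \<noteq> {}"
    using assms unfolding valid_game_def by (auto intro: finite_subset)
  then have "opt_cost A1 A2 \<alpha> \<beta> w1 w2 \<in> (\<lambda>(S1, S2). social_cost \<alpha> \<beta> w1 w2 S1 S2) ` (A1 \<times> A2)"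
    unfolding opt_cost_def by (intro Min_in) auto
  then show ?thesis using that by auto
qed

lemma opt_cost_le:
  assumes "valid_game R \<alpha> \<beta> A1 A2" "O1 \<in> A1" "O2 \<in> A2"
  shows "opt_cost A1 A2 \<alpha> \<beta> w1 w2 \<le> social_cost \<alpha> \<beta> w1 w2 O1 O2"
proof -
  have "finite A1" "finite A2"
    using assms unfolding valid_game_def by (auto intro: finite_subset)
  then show ?thesis
    unfolding opt_cost_def using assms(2,3) by (intro Min_le) auto
qed

lemma NE_social_cost_le_opt_cost:
  assumes "valid_game R \<alpha> \<beta> A1 A2" "is_NE A1 A2 \<alpha> \<beta> w1 w2 S1 S2"
    and "0 \<le> w1" "0 \<le> w2" "0 < w1 + w2"
  shows "social_cost \<alpha> \<beta> w1 w2 S1 S2 \<le> (1 + 2 / sqrt 3) * opt_cost A1 A2 \<alpha> \<beta> w1 w2"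
proof -
  obtain O1 O2 where "O1 \<in> A1" "O2 \<in> A2"
    and "opt_cost A1 A2 \<alpha> \<beta> w1 w2 = social_cost \<alpha> \<beta> w1 w2 O1 O2"
    using opt_cost_attained[OF assms(1)] .
  then show ?thesis using NE_social_cost_le[OF assms(1,2)] assms(3-5) by simp
qed

lemma poa_ratios_le:
  assumes "x \<in> poa_ratios valid_game w1 w2" "0 \<le> w1" "0 \<le> w2" "0 < w1 + w2"
  shows "x \<le> 1 + 2 / sqrt 3"
proof -
  obtain R \<alpha> \<beta> A1 A2 S1 S2 where
    x: "x = social_cost \<alpha> \<beta> w1 w2 S1 S2 / opt_cost A1 A2 \<alpha> \<beta> w1 w2"
    and "valid_game R \<alpha> \<beta> A1 A2" "0 < opt_cost A1 A2 \<alpha> \<beta> w1 w2" "is_NE A1 A2 \<alpha> \<beta> w1 w2 S1 S2"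
    using assms(1) unfolding poa_ratios_def by blast
  then show ?thesis
    using NE_social_cost_le_opt_cost assms(2-4) by (simp add: divide_le_eq)
qed

lemma poa_ratios_mono: "cls \<le> cls' \<Longrightarrow> poa_ratios cls w1 w2 \<subseteq> poa_ratios cls' w1 w2"
  unfolding poa_ratios_def le_fun_def le_bool_def by blast

lemma network_game_le_valid_game: "network_game \<le> valid_game"
  unfolding le_fun_def le_bool_def network_game_def by blast

section \<open>A tight network\<close>

lemma is_walk_meets_cut:
  assumes "is_walk src dst v t es" "set es \<subseteq> E" "v \<in> K" "t \<notin> K"
    and "\<forall>e\<in>E. src e \<in> K \<longrightarrow> e \<notin> B \<longrightarrow> dst e \<in> K"
  shows "set es \<inter> B \<noteq> {}"
  using assms by (induction es arbitrary: v) auto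

lemma is_walk_uses_unique_exit:
  assumes "is_walk src dst v t es" "set es \<subseteq> E" "e \<in> set es" "dst e = u" "u \<noteq> t"
    and "\<forall>e'\<in>E. src e' = u \<longrightarrow> e' = f"
  shows "f \<in> set es"
  using assms
proof (induction es arbitrary: v)
  case (Cons e' es)
  show ?case
  proof (cases "e' = e")
    case True
    with Cons.prems have "is_walk src dst u t es" by simp
    with Cons.prems \<open>u \<noteq> t\<close> show ?thesis by (cases es) auto
  next
    case False
    with Cons show ?thesis by auto
  qed
qed simp

text \<open>Player 1 travels from node 0 to node 5, player 2 from node 8 to node 9:
  \<^item> equilibrium: 0 \<rightarrow> 6 \<rightarrow> 7 \<rightarrow> 5 (arcs 5, 6, 7) and 8 \<rightarrow> 3 \<rightarrow> 4 \<rightarrow> 1 \<rightarrow> 2 \<rightarrow> 9 (arcs 8, 3, 9, 1, 10);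
  \<^item> optimum: 0 \<rightarrow> 1 \<rightarrow> 2 \<rightarrow> 3 \<rightarrow> 4 \<rightarrow> 5 (arcs 0 to 4) and 8 \<rightarrow> 6 \<rightarrow> 7 \<rightarrow> 9 (arcs 11, 6, 12).
  Only arcs 1 and 6 (slopes t and t + 1) and arc 9 (constant (t^2 + t + 1) w) are costly.\<close>

definition ex_tail :: "nat \<Rightarrow> nat" where
  "ex_tail e = [0, 1, 2, 3, 4, 0, 6, 7, 8, 4, 2, 8, 7] ! e"

definition ex_head :: "nat \<Rightarrow> nat" where
  "ex_head e = [1, 2, 3, 4, 5, 6, 7, 5, 3, 1, 9, 6, 9] ! e"

definition ex_arcs :: "nat set" where
  "ex_arcs = {0, 1, 2, 3, 4, 5, 6, 7, 8, 9, 10, 11, 12}"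

definition ex_const :: "real \<Rightarrow> real \<Rightarrow> nat \<Rightarrow> real" where
  "ex_const t w e = (if e = 9 then (t^2 + t + 1) * w else 0)"

definition ex_slope :: "real \<Rightarrow> nat \<Rightarrow> real" where
  "ex_slope t e = (if e = 1 then t else if e = 6 then t + 1 else 0)"

abbreviation "ex_paths1 \<equiv> path_arcsets ex_arcs ex_tail ex_head 0 5"
abbreviation "ex_paths2 \<equiv> path_arcsets ex_arcs ex_tail ex_head 8 9"

lemma ex_paths_members:
  "{5, 6, 7} \<in> ex_paths1" "{0, 1, 2, 3, 4} \<in> ex_paths1"
  "{8, 3, 9, 1, 10} \<in> ex_paths2" "{11, 6, 12} \<in> ex_paths2"
  unfolding path_arcsets_def
     apply (rule CollectI, rule exI[of _ "[5, 6, 7]"])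
     apply (simp add: ex_arcs_def ex_tail_def ex_head_def)
    apply (rule CollectI, rule exI[of _ "[0, 1, 2, 3, 4]"])
    apply (simp add: ex_arcs_def ex_tail_def ex_head_def)
   apply (rule CollectI, rule exI[of _ "[8, 3, 9, 1, 10]"])
   apply (simp add: ex_arcs_def ex_tail_def ex_head_def)
  apply (rule CollectI, rule exI[of _ "[11, 6, 12]"])
  apply (simp add: ex_arcs_def ex_tail_def ex_head_def)
  done

lemma ex_paths_subset: "P \<in> path_arcsets ex_arcs ex_tail ex_head s t \<Longrightarrow> P \<subseteq> ex_arcs"
  unfolding path_arcsets_def by auto

lemma ex_paths1_cut: "P \<in> ex_paths1 \<Longrightarrow> 1 \<in> P \<or> 6 \<in> P"
proof -
  assume "P \<in> ex_paths1"
  then obtain es where es: "P = set es" "set es \<subseteq> ex_arcs" "is_walk ex_tail ex_head 0 5 es"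
    unfolding path_arcsets_def by blast
  have "set es \<inter> {1, 6} \<noteq> {}"
    using es by (intro is_walk_meets_cut[of ex_tail ex_head 0 5 es ex_arcs "{0, 1, 6}"])
      (auto simp: ex_arcs_def ex_tail_def ex_head_def)
  then show ?thesis using es by auto
qed

lemma ex_paths2_cut: "P \<in> ex_paths2 \<Longrightarrow> 6 \<in> P \<or> 9 \<in> P \<and> 1 \<in> P"
proof -
  assume "P \<in> ex_paths2"
  then obtain es where es: "P = set es" "set es \<subseteq> ex_arcs" "is_walk ex_tail ex_head 8 9 es"
    unfolding path_arcsets_def by blast
  have "set es \<inter> {6, 9} \<noteq> {}"
    using es by (intro is_walk_meets_cut[of ex_tail ex_head 8 9 es ex_arcs "{8, 3, 6, 4, 5}"])
      (auto simp: ex_arcs_def ex_tail_def ex_head_def)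
  moreover have "1 \<in> set es" if "9 \<in> set es"
    using es that by (intro is_walk_uses_unique_exit[of ex_tail ex_head 8 9 es ex_arcs 9 1 1])
      (auto simp: ex_arcs_def ex_tail_def ex_head_def)
  ultimately show ?thesis using es by auto
qed

lemma ex_resource_cost_nonneg:
  "0 \<le> t \<Longrightarrow> 0 \<le> w \<Longrightarrow> 0 \<le> ex_const t w r + ex_slope t r * load (t * w) w S1 S2 r"
  by (auto simp: ex_const_def ex_slope_def load_def)

lemma ex_is_NE:
  assumes "0 \<le> t" "0 \<le> w"
  shows "is_NE ex_paths1 ex_paths2 (ex_const t w) (ex_slope t) (t * w) w {5, 6, 7} {8, 3, 9, 1, 10}"
proof -
  let ?pcost = "pcost (ex_const t w) (ex_slope t) (t * w) w"
  have subpath: "?pcost S1 S2 Q \<le> ?pcost S1 S2 P"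
    if "P \<in> path_arcsets ex_arcs ex_tail ex_head s t'" "Q \<subseteq> P" for S1 S2 P Q s t'
  proof (rule pcost_subset_le)
    show "finite P"
      using ex_paths_subset[OF that(1)] by (rule finite_subset) (simp add: ex_arcs_def)
  qed (simp_all add: that(2) ex_resource_cost_nonneg assms)
  let ?S1 = "{5, 6, 7} :: nat set" and ?S2 = "{8, 3, 9, 1, 10} :: nat set"
  have "?pcost ?S1 ?S2 ?S1 = ?pcost P ?S2 {1}" if "1 \<in> P" for P
    using that by (simp add: pcost_def ex_const_def ex_slope_def load_def algebra_simps)
  moreover have "?pcost ?S1 ?S2 ?S1 = ?pcost P ?S2 {6}" if "6 \<in> P" for P
    using that by (simp add: pcost_def ex_const_def ex_slope_def load_def algebra_simps)
  ultimately have dev1: "?pcost ?S1 ?S2 ?S1 \<le> ?pcost P ?S2 P" if P: "P \<in> ex_paths1" for P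
    using ex_paths1_cut[OF P] subpath[OF P, of "{1}"] subpath[OF P, of "{6}"] by auto
  have "?pcost ?S1 ?S2 ?S2 = ?pcost ?S1 P {6}" if "6 \<in> P" for P
    using that by (simp add: pcost_def ex_const_def ex_slope_def load_def algebra_simps power2_eq_square)
  moreover have "?pcost ?S1 ?S2 ?S2 = ?pcost ?S1 P {9, 1}" if "9 \<in> P" "1 \<in> P" for P
    using that by (simp add: pcost_def ex_const_def ex_slope_def load_def algebra_simps power2_eq_square)
  ultimately have dev2: "?pcost ?S1 ?S2 ?S2 \<le> ?pcost ?S1 P P" if P: "P \<in> ex_paths2" for P
    using ex_paths2_cut[OF P] subpath[OF P, of "{6}"] subpath[OF P, of "{9, 1}"] by auto
  show ?thesis
    unfolding is_NE_def cost1_def cost2_def using ex_paths_members dev1 dev2 by blast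
qed

lemma ex_social_costs:
  "social_cost (ex_const t w) (ex_slope t) (t * w) w {5, 6, 7} {8, 3, 9, 1, 10} = (t + 1) * (2 * t + 1) * w"
  "social_cost (ex_const t w) (ex_slope t) (t * w) w {0, 1, 2, 3, 4} {11, 6, 12} = (t^2 + t + 1) * w"
  by (simp_all add: social_cost_def cost1_def cost2_def pcost_def ex_const_def ex_slope_def load_def
      algebra_simps power2_eq_square)

lemma ex_network_game:
  assumes "0 \<le> t" "0 \<le> w"
  shows "network_game ex_arcs (ex_const t w) (ex_slope t) ex_paths1 ex_paths2"
  unfolding network_game_def valid_game_def
  using assms ex_paths_members ex_paths_subset by (auto simp: ex_arcs_def ex_const_def ex_slope_def)

lemma poa_ratios_network_attained:
  assumes "0 < w"
  shows "1 + 2 / sqrt 3 \<in> poa_ratios network_game ((1 + sqrt 3) * w) w"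
proof -
  define t where "t = 1 + sqrt 3"
  let ?\<rho> = "1 + 2 / sqrt 3"
  let ?SC = "social_cost (ex_const t w) (ex_slope t) (t * w) w"
  let ?opt = "opt_cost ex_paths1 ex_paths2 (ex_const t w) (ex_slope t) (t * w) w"
  have t: "0 \<le> t" unfolding t_def by simp
  have network: "network_game ex_arcs (ex_const t w) (ex_slope t) ex_paths1 ex_paths2"
    using ex_network_game t assms by simp
  then have valid: "valid_game ex_arcs (ex_const t w) (ex_slope t) ex_paths1 ex_paths2"
    unfolding network_game_def by blast
  have NE: "is_NE ex_paths1 ex_paths2 (ex_const t w) (ex_slope t) (t * w) w {5, 6, 7} {8, 3, 9, 1, 10}"
    using ex_is_NE t assms by simp
  have tight: "?SC {5, 6, 7} {8, 3, 9, 1, 10} = ?\<rho> * ?SC {0, 1, 2, 3, 4} {11, 6, 12}"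
    using poa_weights_eq[of t 1] unfolding ex_social_costs by (simp add: t_def power2_eq_square)
  \<comment> \<open>The optimum is never searched for: the upper bound squeezes it onto the displayed profile.\<close>
  then have "?\<rho> * ?SC {0, 1, 2, 3, 4} {11, 6, 12} = ?SC {5, 6, 7} {8, 3, 9, 1, 10}" ..
  also have "\<dots> \<le> ?\<rho> * ?opt"
    using NE_social_cost_le_opt_cost[OF valid NE] t assms by (simp add: add_nonneg_pos)
  finally have "?SC {0, 1, 2, 3, 4} {11, 6, 12} \<le> ?opt"
    by (rule mult_left_le_imp_le) (simp add: add_pos_nonneg)
  then have opt: "?opt = ?SC {0, 1, 2, 3, 4} {11, 6, 12}"
    using opt_cost_le[OF valid ex_paths_members(2,4), of "t * w" w] by linarith
  have "0 < ?opt" unfolding opt ex_social_costs using t assms by (simp add: add_nonneg_pos)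
  moreover have "?\<rho> = ?SC {5, 6, 7} {8, 3, 9, 1, 10} / ?opt"
    using tight opt \<open>0 < ?opt\<close> by simp
  ultimately show ?thesis
    unfolding poa_ratios_def t_def[symmetric] using network NE by blast
qed

section \<open>The price of anarchy\<close>

text \<open>Since x / 0 = 0, the hypothesis on the weight ratio excludes a vanishing weight.\<close>
lemma poa_weight_ratio_cases:
  fixes w1 w2 :: real
  assumes "0 \<le> w1" "0 \<le> w2" "w1 / w2 = 1 + sqrt 3 \<or> w2 / w1 = 1 + sqrt 3"
  obtains "0 < w2" "w1 = (1 + sqrt 3) * w2" | "0 < w1" "w2 = (1 + sqrt 3) * w1"
proof -
  have ratio: "1 + sqrt 3 \<noteq> (0 :: real)" using real_sqrt_ge_zero[of 3] by linarith
  from assms(3) show ?thesis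
  proof
    assume "w1 / w2 = 1 + sqrt 3"
    moreover from this ratio have "w2 \<noteq> 0" by auto
    ultimately show ?thesis using assms(2) that(1) by (simp add: field_simps)
  next
    assume "w2 / w1 = 1 + sqrt 3"
    moreover from this ratio have "w1 \<noteq> 0" by auto
    ultimately show ?thesis using assms(1) that(2) by (simp add: field_simps)
  qed
qed

lemma poa_ratios_attained:
  assumes "network_game \<le> cls" "0 \<le> w1" "0 \<le> w2" "w1 / w2 = 1 + sqrt 3 \<or> w2 / w1 = 1 + sqrt 3"
  shows "1 + 2 / sqrt 3 \<in> poa_ratios cls w1 w2"
proof -
  from assms(2-4) have "1 + 2 / sqrt 3 \<in> poa_ratios network_game w1 w2"
  proof (cases rule: poa_weight_ratio_cases)
    case 1
    then show ?thesis using poa_ratios_network_attained by simp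
  next
    case 2
    then show ?thesis
      using poa_ratios_network_attained poa_ratios_swap[OF network_game_swap] by simp
  qed
  then show ?thesis using poa_ratios_mono[OF assms(1)] by blast
qed

lemma poa_fixed_eq:
  assumes "network_game \<le> cls" "cls \<le> valid_game"
    and "0 \<le> w1" "0 \<le> w2" "w1 / w2 = 1 + sqrt 3 \<or> w2 / w1 = 1 + sqrt 3"
  shows "poa_fixed cls w1 w2 = 1 + 2 / sqrt 3"
  unfolding poa_fixed_def
proof (rule cSup_eq_maximum)
  show "1 + 2 / sqrt 3 \<in> poa_ratios cls w1 w2"
    using poa_ratios_attained assms(1,3-5) .
  have "0 < w1 + w2"
    using assms(3,4) by (cases rule: poa_weight_ratio_cases[OF assms(3-5)]) linarith+
  then show "x \<le> 1 + 2 / sqrt 3" if "x \<in> poa_ratios cls w1 w2" for x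
    using poa_ratios_le poa_ratios_mono[OF assms(2)] that assms(3,4) by blast
qed

lemma poa_all_eq:
  assumes "network_game \<le> cls" "cls \<le> valid_game"
  shows "poa_all cls = 1 + 2 / sqrt 3"
  unfolding poa_all_def
proof (rule cSup_eq_maximum)
  have "0 < (1 + sqrt 3) + (1 :: real)" by (simp add: add_pos_nonneg)
  then have "poa_ratios cls (1 + sqrt 3) 1
      \<in> {poa_ratios cls w1 w2 |w1 w2. 0 \<le> w1 \<and> 0 \<le> w2 \<and> 0 < w1 + w2}"
    by (intro CollectI exI[of _ "1 + sqrt 3"] exI[of _ 1]) simp
  moreover have "1 + 2 / sqrt 3 \<in> poa_ratios cls (1 + sqrt 3) 1"
    using poa_ratios_attained[OF assms(1)] by simp
  ultimately show "1 + 2 / sqrt 3 \<in> \<Union>{poa_ratios cls w1 w2 |w1 w2. 0 \<le> w1 \<and> 0 \<le> w2 \<and> 0 < w1 + w2}"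
    by (rule UnionI)
next
  fix x assume "x \<in> \<Union>{poa_ratios cls w1 w2 |w1 w2. 0 \<le> w1 \<and> 0 \<le> w2 \<and> 0 < w1 + w2}"
  then obtain w1 w2 where "x \<in> poa_ratios cls w1 w2" "0 \<le> w1" "0 \<le> w2" "0 < w1 + w2"
    by blast
  then show "x \<le> 1 + 2 / sqrt 3"
    using poa_ratios_le poa_ratios_mono[OF assms(2)] by blast
qed

theorem corollary1:
  shows "poa_all valid_game = 1 + 2 / sqrt 3 \<and>
         poa_all network_game = 1 + 2 / sqrt 3 \<and>
         (\<forall>w1 w2. 0 \<le> w1 \<and> 0 \<le> w2 \<and> (w1 / w2 = 1 + sqrt 3 \<or> w2 / w1 = 1 + sqrt 3) \<longrightarrow>
            poa_fixed valid_game w1 w2 = 1 + 2 / sqrt 3 \<and>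
            poa_fixed network_game w1 w2 = 1 + 2 / sqrt 3)"
proof (intro conjI allI impI)
  show "poa_all valid_game = 1 + 2 / sqrt 3"
    by (rule poa_all_eq[OF network_game_le_valid_game order_refl])
  show "poa_all network_game = 1 + 2 / sqrt 3"
    by (rule poa_all_eq[OF order_refl network_game_le_valid_game])
  fix w1 w2 :: real
  assume "0 \<le> w1 \<and> 0 \<le> w2 \<and> (w1 / w2 = 1 + sqrt 3 \<or> w2 / w1 = 1 + sqrt 3)"
  then show "poa_fixed valid_game w1 w2 = 1 + 2 / sqrt 3"
    and "poa_fixed network_game w1 w2 = 1 + 2 / sqrt 3"
    using poa_fixed_eq[OF network_game_le_valid_game order_refl]
      poa_fixed_eq[OF order_refl network_game_le_valid_game] by blast+
qed

end
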